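(* Let $X$ be a finite set of proposals with $|X|\geq 3$. No profile-index-based DSF $\Delta_\delta$ induced by a neutral profile index function $\delta$ satisfies Position Unanimity.
   Context: $X!$ is the set of strict linear orders on $X$; a profile is a function $R:N\to X!$ with $N\subset\mathbb{N}$ finite and nonempty. A profile is unanimous if all agents report the same ranking. A profile index function is a function $\delta$ from the set of all profiles to $\mathbb{R}$; it is neutral if $\delta(R)=\delta(\sigma(R))$ for every permutation $\sigma:X\to X$ (applied to rename proposals in every ranking). $R^{\hat{x}}$ denotes the profile obtained from $R$ by moving $x$ to the top of every agent's ranking (other proposals keep their relative order), and $\Delta_\delta(R)=\arg\min_{x\in X}\delta(R^{\hat{x}})$. A proposal $x$ occurs in the same position throughout $R$ if the number of proposals ranked above $x$ is the same in every agent's ranking. Position Unanimity: $x\notin\Delta(R)$ for every non-unanimous profile $R$ and every proposal $x$ occurring in the same position throughout $R$. *)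

theory Defs
  imports Complex_Main
begin

text \<open>Proposals are the elements of a finite type 'a (the set X = UNIV).
  A ranking is a strict linear order on X, given as a relation r where (y,x) \<in> r
  means y is ranked above x.  A profile R : N \<rightarrow> X! (N \<subseteq> nat finite, nonempty)
  is represented as a partial map nat \<Rightarrow> 'a rel option with domain N.\<close>

type_synonym 'a profile = "nat \<Rightarrow> 'a rel option"

definition is_profile :: "'a profile \<Rightarrow> bool" where
  "is_profile R \<longleftrightarrow> finite (dom R) \<and> dom R \<noteq> {} \<and>
     (\<forall>i r. R i = Some r \<longrightarrow> strict_linear_order_on UNIV r)"

definition unanimous :: "'a profile \<Rightarrow> bool" where
  "unanimous R \<longleftrightarrow> (\<forall>i\<in>dom R. \<forall>j\<in>dom R. R i = R j)"

definition rename_profile :: "('a \<Rightarrow> 'a) \<Rightarrow> 'a profile \<Rightarrow> 'a profile" where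
  "rename_profile \<sigma> R = (\<lambda>i. map_option (\<lambda>r. map_prod \<sigma> \<sigma> ` r) (R i))"

definition neutral :: "('a profile \<Rightarrow> real) \<Rightarrow> bool" where
  "neutral \<delta> \<longleftrightarrow> (\<forall>R \<sigma>. is_profile R \<and> bij \<sigma> \<longrightarrow> \<delta> R = \<delta> (rename_profile \<sigma> R))"

definition move_top :: "'a \<Rightarrow> 'a rel \<Rightarrow> 'a rel" where
  "move_top x r = {(y, z) \<in> r. y \<noteq> x \<and> z \<noteq> x} \<union> {(x, z) | z. z \<noteq> x}"

definition top_profile :: "'a \<Rightarrow> 'a profile \<Rightarrow> 'a profile" where
  "top_profile x R = (\<lambda>i. map_option (move_top x) (R i))"

text \<open>\<Delta>_\<delta>(R) = argmin_x \<delta>(R^x).\<close>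
definition Delta :: "('a profile \<Rightarrow> real) \<Rightarrow> 'a profile \<Rightarrow> 'a set" where
  "Delta \<delta> R = {x. \<forall>y. \<delta> (top_profile x R) \<le> \<delta> (top_profile y R)}"

definition position :: "'a rel \<Rightarrow> 'a \<Rightarrow> nat" where
  "position r x = card {y. (y, x) \<in> r}"

definition same_position :: "'a profile \<Rightarrow> 'a \<Rightarrow> bool" where
  "same_position R x \<longleftrightarrow>
     (\<forall>i j ri rj. R i = Some ri \<and> R j = Some rj \<longrightarrow> position ri x = position rj x)"

definition position_unanimity :: "('a profile \<Rightarrow> 'a set) \<Rightarrow> bool" where
  "position_unanimity D \<longleftrightarrow>
     (\<forall>R x. is_profile R \<and> \<not> unanimous R \<and> same_position R x \<longrightarrow> x \<notin> D R)"

end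

theory Submission
  imports Defs "HOL-Combinatorics.Transposition"
begin

text \<open>Let r be a ranking in which a, b, c occupy three consecutive places, and let R be the
  two-agent profile consisting of r and of r with a and c interchanged.  R is not unanimous and
  every proposal other than a and c has the same position in both rankings, so Position Unanimity
  forces \<Delta>(R) \<subseteq> {a, c}.  But a and b are adjacent in both rankings, so the transposition of
  a and b maps R^a onto R^b, and neutrality gives \<delta>(R^a) = \<delta>(R^b); likewise
  \<delta>(R^b) = \<delta>(R^c).  Hence b minimises \<delta>(R^x) as well, a contradiction.\<close>

abbreviation rename_rel :: "('a \<Rightarrow> 'a) \<Rightarrow> 'a rel \<Rightarrow> 'a rel" where
  "rename_rel \<sigma> r \<equiv> map_prod \<sigma> \<sigma> ` r"

lemma mem_rename_rel_iff:
  assumes "bij \<sigma>"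
  shows "(p, q) \<in> rename_rel \<sigma> r \<longleftrightarrow> (inv \<sigma> p, inv \<sigma> q) \<in> r"
proof
  assume "(p, q) \<in> rename_rel \<sigma> r"
  then show "(inv \<sigma> p, inv \<sigma> q) \<in> r"
    using assms by (auto simp: bij_is_inj)
next
  assume "(inv \<sigma> p, inv \<sigma> q) \<in> r"
  then have "map_prod \<sigma> \<sigma> (inv \<sigma> p, inv \<sigma> q) \<in> rename_rel \<sigma> r"
    by (rule imageI)
  then show "(p, q) \<in> rename_rel \<sigma> r"
    using assms by (simp add: bij_is_surj surj_f_inv_f)
qed

lemma strict_linear_order_rename_rel:
  assumes "bij \<sigma>" and "strict_linear_order r"
  shows "strict_linear_order (rename_rel \<sigma> r)"
  using assms unfolding strict_linear_order_on_def trans_def irrefl_def total_on_def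
  by (simp add: mem_rename_rel_iff) (metis bij_imp_bij_inv bij_is_inj injD)

lemma position_rename_rel:
  assumes "bij \<sigma>"
  shows "position (rename_rel \<sigma> r) (\<sigma> x) = position r x"
proof -
  have "{y. (y, \<sigma> x) \<in> rename_rel \<sigma> r} = \<sigma> ` {y. (y, x) \<in> r}"
    using assms by (simp add: bij_image_Collect_eq mem_rename_rel_iff bij_is_inj)
  then show ?thesis
    by (simp add: position_def card_image[OF inj_on_subset[OF bij_is_inj[OF assms]]])
qed

lemma move_top_rename_rel:
  assumes "bij \<sigma>"
  shows "rename_rel \<sigma> (move_top u r) = move_top (\<sigma> u) (rename_rel \<sigma> r)"
proof (rule set_eqI, clarify)
  fix p q
  have inv_eq: "inv \<sigma> x = u \<longleftrightarrow> x = \<sigma> u" for x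
    using assms by (metis bij_inv_eq_iff)
  have "(\<exists>z. q = \<sigma> z \<and> z \<noteq> u) \<longleftrightarrow> q \<noteq> \<sigma> u"
    using assms by (metis bij_inv_eq_iff)
  then show "(p, q) \<in> rename_rel \<sigma> (move_top u r) \<longleftrightarrow>
      (p, q) \<in> move_top (\<sigma> u) (rename_rel \<sigma> r)"
    using assms by (simp add: move_top_def mem_rename_rel_iff inv_eq)
qed

lemma top_profile_rename_profile:
  assumes "bij \<sigma>"
  shows "rename_profile \<sigma> (top_profile u R) = top_profile (\<sigma> u) (rename_profile \<sigma> R)"
  using assms
  by (simp add: rename_profile_def top_profile_def option.map_comp comp_def move_top_rename_rel)

lemma is_profile_top_profile:
  assumes "is_profile R"
  shows "is_profile (top_profile x R)"
proof -
  have "strict_linear_order (move_top x r)" if "strict_linear_order r" for r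
    using that unfolding strict_linear_order_on_def move_top_def trans_def irrefl_def total_on_def
    by blast
  then have "strict_linear_order r'" if "top_profile x R i = Some r'" for i r'
    using assms that unfolding is_profile_def top_profile_def by auto
  moreover have "dom (top_profile x R) = dom R"
    by (simp add: top_profile_def dom_def)
  ultimately show ?thesis
    using assms unfolding is_profile_def by simp
qed

definition adjacent :: "'a rel \<Rightarrow> 'a \<Rightarrow> 'a \<Rightarrow> bool" where
  "adjacent r a b \<longleftrightarrow>
     (\<forall>z. z \<noteq> a \<longrightarrow> z \<noteq> b \<longrightarrow>
        ((a, z) \<in> r \<longleftrightarrow> (b, z) \<in> r) \<and> ((z, a) \<in> r \<longleftrightarrow> (z, b) \<in> r))"

lemma adjacent_commute: "adjacent r a b \<longleftrightarrow> adjacent r b a"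
  unfolding adjacent_def by blast

lemma adjacent_rename_rel:
  assumes "bij \<sigma>" and "adjacent r a b"
  shows "adjacent (rename_rel \<sigma> r) (\<sigma> a) (\<sigma> b)"
  using assms unfolding adjacent_def
  by (simp add: mem_rename_rel_iff bij_is_inj) (metis bij_inv_eq_iff)

lemma move_top_transpose_adjacent:
  assumes "irrefl r" and "adjacent r a b"
  shows "move_top b (rename_rel (transpose a b) r) = move_top b r"
  using assms unfolding move_top_def adjacent_def irrefl_def
  by (auto simp: mem_rename_rel_iff transpose_def split: if_splits)

lemma top_profile_rename_transpose_adjacent:
  assumes "is_profile R" and "\<And>i r. R i = Some r \<Longrightarrow> adjacent r a b"
  shows "top_profile b (rename_profile (transpose a b) R) = top_profile b R"
proof
  fix i
  show "top_profile b (rename_profile (transpose a b) R) i = top_profile b R i"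
  proof (cases "R i")
    case (Some r)
    then have "strict_linear_order r"
      using assms(1) unfolding is_profile_def by blast
    then have "irrefl r"
      by (simp add: strict_linear_order_on_def)
    moreover have "adjacent r a b"
      using assms(2) Some .
    ultimately show ?thesis
      using Some by (simp add: top_profile_def rename_profile_def move_top_transpose_adjacent)
  qed (simp add: top_profile_def rename_profile_def)
qed

lemma neutral_top_profile_adjacent:
  assumes "neutral \<delta>" and "is_profile R" and "\<And>i r. R i = Some r \<Longrightarrow> adjacent r a b"
  shows "\<delta> (top_profile a R) = \<delta> (top_profile b R)"
proof -
  have "\<delta> (top_profile a R) = \<delta> (rename_profile (transpose a b) (top_profile a R))"
    using assms(1) is_profile_top_profile[OF assms(2)] unfolding neutral_def by simp
  also have "\<dots> = \<delta> (top_profile b (rename_profile (transpose a b) R))"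
    by (simp add: top_profile_rename_profile)
  also have "\<dots> = \<delta> (top_profile b R)"
    using assms(2,3) by (simp add: top_profile_rename_transpose_adjacent)
  finally show ?thesis .
qed

lemma Delta_nonempty:
  fixes \<delta> :: "('a::finite) profile \<Rightarrow> real"
  shows "Delta \<delta> R \<noteq> {}"
proof -
  obtain m :: 'a where "is_arg_min (\<lambda>x. \<delta> (top_profile x R)) (\<lambda>x. x \<in> UNIV) m"
    using ex_is_arg_min_if_finite[OF finite_UNIV UNIV_not_empty] by blast
  then have "m \<in> Delta \<delta> R"
    by (auto simp: is_arg_min_def Delta_def not_less)
  then show ?thesis by blast
qed

definition ranking_by :: "('a \<Rightarrow> nat) \<Rightarrow> 'a rel" where
  "ranking_by h = {(y, z). h y < h z}"

lemma strict_linear_order_ranking_by: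
  assumes "inj h"
  shows "strict_linear_order (ranking_by h)"
  using assms unfolding strict_linear_order_on_def ranking_by_def trans_def irrefl_def total_on_def
  by (auto simp: inj_eq) (metis injD linorder_neq_iff)

lemma adjacent_ranking_by:
  assumes "inj h" and "h b = Suc (h a)"
  shows "adjacent (ranking_by h) a b"
proof -
  have "h z \<noteq> h a" "h z \<noteq> h b" if "z \<noteq> a" "z \<noteq> b" for z
    using assms(1) that by (simp_all add: inj_eq)
  then show ?thesis
    using assms(2) unfolding adjacent_def ranking_by_def by fastforce
qed

lemma ex_ranking_consecutive:
  fixes a b c :: "'a::finite"
  assumes "a \<noteq> b" "b \<noteq> c" "a \<noteq> c"
  obtains r where "strict_linear_order r" "(a, c) \<in> r" "adjacent r a b" "adjacent r b c"
proof -
  obtain g :: "'a \<Rightarrow> nat" where "inj g"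
    using finite_imp_inj_to_nat_seg[OF finite_UNIV] by blast
  define h where "h x = (if x = a then 0 else if x = b then 1 else if x = c then 2 else g x + 3)" for x
  have "inj h"
    using assms \<open>inj g\<close> unfolding h_def by (auto intro!: injI dest: injD split: if_splits)
  with assms show thesis
    by (intro that[of "ranking_by h"] strict_linear_order_ranking_by adjacent_ranking_by)
      (auto simp: ranking_by_def h_def)
qed

lemma is_profile_two_agents:
  assumes "strict_linear_order r" and "strict_linear_order s"
  shows "is_profile [0 \<mapsto> r, 1 \<mapsto> s]"
  using assms by (simp add: is_profile_def)

lemma unanimous_two_agents_iff: "unanimous [0 \<mapsto> r, 1 \<mapsto> s] \<longleftrightarrow> r = s"
  by (auto simp: unanimous_def)

lemma same_position_two_agents_iff:
  "same_position [0 \<mapsto> r, 1 \<mapsto> s] x \<longleftrightarrow> position r x = position s x"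
  by (auto simp: same_position_def)

lemma ex_profile_swapping_ends:
  fixes a b c :: "'a::finite"
  assumes "a \<noteq> b" "b \<noteq> c" "a \<noteq> c"
  obtains R where "is_profile R" and "\<not> unanimous R"
    and "\<And>x. x \<noteq> a \<Longrightarrow> x \<noteq> c \<Longrightarrow> same_position R x"
    and "\<And>i r. R i = Some r \<Longrightarrow> adjacent r a b \<and> adjacent r b c"
proof -
  obtain r where r: "strict_linear_order r" "(a, c) \<in> r" "adjacent r a b" "adjacent r b c"
    using ex_ranking_consecutive assms by blast
  define s where "s = rename_rel (transpose a c) r"
  have "strict_linear_order s"
    using r(1) by (simp add: s_def strict_linear_order_rename_rel)
  have "r \<noteq> s"
  proof
    assume "r = s"
    then have "(a, c) \<in> s"
      using r(2) by simp
    then have "(c, a) \<in> r"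
      by (simp add: s_def mem_rename_rel_iff)
    with r(1,2) show False
      unfolding strict_linear_order_on_def trans_def irrefl_def by blast
  qed
  have same: "position r x = position s x" if "x \<noteq> a" "x \<noteq> c" for x
    using position_rename_rel[of "transpose a c" r x] that by (simp add: s_def)
  have adj: "adjacent s a b" "adjacent s b c"
    using adjacent_rename_rel[of "transpose a c" r c b] adjacent_rename_rel[of "transpose a c" r b a]
      r assms by (simp_all add: s_def adjacent_commute)
  show thesis
  proof (rule that[of "[0 \<mapsto> r, 1 \<mapsto> s]"])
    show "is_profile [0 \<mapsto> r, 1 \<mapsto> s]"
      using r(1) \<open>strict_linear_order s\<close> by (rule is_profile_two_agents)
    show "\<not> unanimous [0 \<mapsto> r, 1 \<mapsto> s]"
      unfolding unanimous_two_agents_iff by (rule \<open>r \<noteq> s\<close>)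
    show "same_position [0 \<mapsto> r, 1 \<mapsto> s] x" if "x \<noteq> a" "x \<noteq> c" for x
      unfolding same_position_two_agents_iff by (rule same[OF that])
    show "adjacent t a b \<and> adjacent t b c" if "[0 \<mapsto> r, 1 \<mapsto> s] i = Some t" for i t
      using that r adj by (auto split: if_splits)
  qed
qed

theorem theorem2:
  assumes "card (UNIV :: 'a set) \<ge> 3"
  shows "\<not> (\<exists>\<delta> :: ('a::finite) profile \<Rightarrow> real. neutral \<delta> \<and> position_unanimity (Delta \<delta>))"
proof
  assume "\<exists>\<delta> :: 'a profile \<Rightarrow> real. neutral \<delta> \<and> position_unanimity (Delta \<delta>)"
  then obtain \<delta> :: "'a profile \<Rightarrow> real"
    where neutral: "neutral \<delta>" and unanimity: "position_unanimity (Delta \<delta>)"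
    by blast
  obtain S :: "'a set" where "card S = 3"
    using obtain_subset_with_card_n[OF assms] by metis
  then obtain a b c :: 'a where abc: "a \<noteq> b" "b \<noteq> c" "a \<noteq> c"
    unfolding card_3_iff by blast
  obtain R where R: "is_profile R" "\<not> unanimous R"
    and same: "\<And>x. x \<noteq> a \<Longrightarrow> x \<noteq> c \<Longrightarrow> same_position R x"
    and adj: "\<And>i r. R i = Some r \<Longrightarrow> adjacent r a b \<and> adjacent r b c"
    using ex_profile_swapping_ends[OF abc] by blast
  have ab: "\<delta> (top_profile a R) = \<delta> (top_profile b R)"
    and bc: "\<delta> (top_profile b R) = \<delta> (top_profile c R)"
    using neutral_top_profile_adjacent[OF neutral R(1)] adj by blast+
  have outside: "x \<notin> Delta \<delta> R" if "x \<noteq> a" "x \<noteq> c" for x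
    using unanimity R same[OF that] unfolding position_unanimity_def by blast
  obtain m where m: "m \<in> Delta \<delta> R"
    using Delta_nonempty by blast
  then have "m = a \<or> m = c"
    using outside by blast
  then have "\<delta> (top_profile b R) = \<delta> (top_profile m R)"
    using ab bc by auto
  with m have "b \<in> Delta \<delta> R"
    by (simp add: Delta_def)
  with outside[of b] abc show False
    by auto
qed

end
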